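(* Every $2$-connected finitely separable graph is countable.
   Context: Two vertices of a graph $G$ are finitely separable if some finite set of edges of $G$ separates them in $G$. A graph is finitely separable if every pair of its vertices is finitely separable. *)

theory Defs
  imports Main "HOL-Library.Countable_Set"
begin

definition is_graph :: "'a set \<Rightarrow> 'a set set \<Rightarrow> bool" where
  "is_graph V E \<longleftrightarrow> (\<forall>e\<in>E. \<exists>u v. u \<in> V \<and> v \<in> V \<and> u \<noteq> v \<and> e = {u, v})"

definition joined :: "'a set set \<Rightarrow> 'a \<Rightarrow> 'a \<Rightarrow> bool" where
  "joined E u v \<longleftrightarrow> (\<lambda>x y. {x, y} \<in> E)\<^sup>*\<^sup>* u v"

definition graph_connected :: "'a set \<Rightarrow> 'a set set \<Rightarrow> bool" where
  "graph_connected V E \<longleftrightarrow> V \<noteq> {} \<and> (\<forall>u\<in>V. \<forall>v\<in>V. joined E u v)"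

definition two_connected :: "'a set \<Rightarrow> 'a set set \<Rightarrow> bool" where
  "two_connected V E \<longleftrightarrow>
     (\<exists>a b c. a \<in> V \<and> b \<in> V \<and> c \<in> V \<and> a \<noteq> b \<and> a \<noteq> c \<and> b \<noteq> c) \<and>
     graph_connected V E \<and>
     (\<forall>x\<in>V. graph_connected (V - {x}) {e\<in>E. x \<notin> e})"

definition finitely_separable_pair :: "'a set set \<Rightarrow> 'a \<Rightarrow> 'a \<Rightarrow> bool" where
  "finitely_separable_pair E u v \<longleftrightarrow> (\<exists>F. F \<subseteq> E \<and> finite F \<and> \<not> joined (E - F) u v)"

definition finitely_separable :: "'a set \<Rightarrow> 'a set set \<Rightarrow> bool" where
  "finitely_separable V E \<longleftrightarrow>
     (\<forall>u\<in>V. \<forall>v\<in>V. u \<noteq> v \<longrightarrow> finitely_separable_pair E u v)"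

end

theory Submission
  imports Defs
begin

text \<open>
  Fix a vertex x and a vertex c0 \<noteq> x. Choose for every c \<noteq> x a finite edge set F c
  separating x from c, and let C be the smallest set containing c0 that contains,
  with each c, all endpoints other than x of the edges in F c; C is countable.
  Every neighbour z of x lies in C: otherwise follow a path from z to c0 in G - x.
  Each edge used has an endpoint outside insert x C, so it lies in no F c with c \<in> C;
  hence inductively every vertex w of the path stays joined to x in E - F c for all
  c \<in> C, which forces w \<notin> C. But the path ends in c0 \<in> C.
  So all degrees are countable, and a connected graph with countable degrees is
  countable.
\<close>

lemma countable_reachable:
  assumes "\<And>c. R\<^sup>*\<^sup>* a c \<Longrightarrow> countable {d. R c d}"
  shows "countable {d. R\<^sup>*\<^sup>* a d}"
proof -
  have "countable {d. (R ^^ n) a d}" for n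
  proof (induction n)
    case 0
    then show ?case by simp
  next
    case (Suc n)
    have "{d. (R ^^ Suc n) a d} = (\<Union>c\<in>{c. (R ^^ n) a c}. {d. R c d})"
      by auto
    moreover have "countable {d. R c d}" if "(R ^^ n) a c" for c
      using assms that by (meson relpowp_imp_rtranclp)
    ultimately show ?case
      using Suc by (auto intro!: countable_UN)
  qed
  moreover have "{d. R\<^sup>*\<^sup>* a d} = (\<Union>n. {d. (R ^^ n) a d})"
    by (auto simp: rtranclp_power)
  ultimately show ?thesis
    by auto
qed

lemma is_graph_edgeE:
  assumes "is_graph V E" "e \<in> E"
  obtains u v where "u \<in> V" "v \<in> V" "u \<noteq> v" "e = {u, v}"
  using assms unfolding is_graph_def by meson

lemma is_graph_finite_edge: "is_graph V E \<Longrightarrow> e \<in> E \<Longrightarrow> finite e"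
  by (erule (1) is_graph_edgeE) simp

lemma is_graph_Union_subset: "is_graph V E \<Longrightarrow> \<Union>E \<subseteq> V"
  by (auto elim: is_graph_edgeE)

lemma is_graph_neighbour:
  assumes "is_graph V E" "{x, z} \<in> E"
  shows "z \<in> V" "z \<noteq> x"
  using is_graph_edgeE[OF assms] by (metis doubleton_eq_iff)+

lemma countable_if_connected_countable_neighbours:
  assumes "is_graph V E" "graph_connected V E"
    and "\<And>x. x \<in> V \<Longrightarrow> countable {z. {x, z} \<in> E}"
  shows "countable V"
proof -
  obtain v0 where v0: "v0 \<in> V"
    using assms(2) unfolding graph_connected_def by blast
  have "countable {z. {x, z} \<in> E}" for x
  proof (cases "x \<in> V")
    case False
    then have "{z. {x, z} \<in> E} = {}"
      using is_graph_Union_subset[OF assms(1)] by blast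
    then show ?thesis by simp
  qed (rule assms(3))
  then have "countable {v. joined E v0 v}"
    unfolding joined_def by (rule countable_reachable)
  moreover have "V \<subseteq> {v. joined E v0 v}"
    using assms(2) v0 unfolding graph_connected_def by blast
  ultimately show ?thesis
    by (rule countable_subset[rotated])
qed

lemma component_avoids_cut_closed_set:
  assumes cut: "\<And>c. c \<in> C \<Longrightarrow> \<not> joined (E - F c) x c"
    and closed: "\<And>c. c \<in> C \<Longrightarrow> \<Union>(F c) \<subseteq> insert x C"
    and xz: "{x, z} \<in> E" "z \<notin> insert x C"
    and "joined {e \<in> E. x \<notin> e} z w"
  shows "w \<notin> C"
proof -
  have uncut: "e \<notin> F c" if "c \<in> C" "u \<in> e" "u \<notin> insert x C" for c e u
    using closed[OF \<open>c \<in> C\<close>] that(2,3) by blast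
  have "\<forall>c\<in>C. joined (E - F c) x w"
    using \<open>joined {e \<in> E. x \<notin> e} z w\<close> unfolding joined_def
  proof (induction rule: rtranclp_induct)
    case base
    have "{x, z} \<in> E - F c" if "c \<in> C" for c
      using xz uncut[OF that, of z "{x, z}"] by blast
    then show ?case
      by (blast intro: r_into_rtranclp)
  next
    case (step w w')
    then have edge: "{w, w'} \<in> E" "x \<noteq> w"
      by auto
    have "w \<notin> C"
      using step.IH cut unfolding joined_def by blast
    have "{w, w'} \<in> E - F c" if "c \<in> C" for c
      using edge \<open>w \<notin> C\<close> uncut[OF that, of w "{w, w'}"] by blast
    then show ?case
      using step.IH by (blast intro: rtranclp.rtrancl_into_rtrancl)
  qed
  then show ?thesis
    using cut by blast
qed

lemma countable_neighbours_if_finitely_separable: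
  assumes graph: "is_graph V E"
    and conn: "graph_connected (V - {x}) {e \<in> E. x \<notin> e}"
    and sep: "\<And>c. c \<in> V - {x} \<Longrightarrow> finitely_separable_pair E x c"
  shows "countable {z. {x, z} \<in> E}"
proof -
  obtain c0 where c0: "c0 \<in> V - {x}"
    using conn unfolding graph_connected_def by blast
  define F where "F c = (SOME F. F \<subseteq> E \<and> finite F \<and> \<not> joined (E - F) x c)" for c
  have F: "F c \<subseteq> E" "finite (F c)" "\<not> joined (E - F c) x c" if "c \<in> V - {x}" for c
    using someI_ex[OF sep[OF that, unfolded finitely_separable_pair_def]]
    unfolding F_def by blast+
  define R where "R c d \<longleftrightarrow> d \<in> \<Union>(F c) \<and> d \<noteq> x" for c d
  define C where "C = {d. R\<^sup>*\<^sup>* c0 d}"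
  have C_sub: "C \<subseteq> V - {x}"
  proof
    fix d assume "d \<in> C"
    then have "R\<^sup>*\<^sup>* c0 d"
      unfolding C_def by simp
    then show "d \<in> V - {x}"
    proof (induction rule: rtranclp_induct)
      case (step c d)
      then show ?case
        using F(1)[of c] is_graph_Union_subset[OF graph] unfolding R_def by blast
    qed (use c0 in simp)
  qed
  have finite_succ: "finite {d. R c d}" if "c \<in> C" for c
  proof -
    have "finite (\<Union>(F c))"
      using F(1,2)[of c] C_sub that is_graph_finite_edge[OF graph]
      by (intro finite_Union) auto
    then show ?thesis
      unfolding R_def by (rule rev_finite_subset) auto
  qed
  have "countable C"
    unfolding C_def
    by (rule countable_reachable, rule countable_finite, rule finite_succ) (simp add: C_def)
  moreover have "{z. {x, z} \<in> E} \<subseteq> C"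
  proof (rule subsetI, rule ccontr)
    fix z assume "z \<in> {z. {x, z} \<in> E}" "z \<notin> C"
    then have xz: "{x, z} \<in> E" and "z \<notin> insert x C"
      using is_graph_neighbour[OF graph] by auto
    have "c0 \<notin> C"
    proof (rule component_avoids_cut_closed_set[OF _ _ xz \<open>z \<notin> insert x C\<close>])
      show "\<not> joined (E - F c) x c" if "c \<in> C" for c
        using F(3) C_sub that by blast
      show "\<Union>(F c) \<subseteq> insert x C" if "c \<in> C" for c
        using that unfolding C_def R_def by (auto intro: rtranclp.rtrancl_into_rtrancl)
      show "joined {e \<in> E. x \<notin> e} z c0"
        using conn c0 is_graph_neighbour[OF graph xz] unfolding graph_connected_def by blast
    qed
    then show False
      unfolding C_def by simp
  qed
  ultimately show ?thesis
    by (rule countable_subset[rotated])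
qed

theorem mainTheorem4:
  fixes V :: "'a set" and E :: "'a set set"
  assumes "is_graph V E"
    and "two_connected V E"
    and "finitely_separable V E"
  shows "countable V"
proof (rule countable_if_connected_countable_neighbours[OF assms(1)])
  show "graph_connected V E"
    using assms(2) unfolding two_connected_def by blast
next
  fix x assume "x \<in> V"
  show "countable {z. {x, z} \<in> E}"
  proof (rule countable_neighbours_if_finitely_separable[OF assms(1)])
    show "graph_connected (V - {x}) {e \<in> E. x \<notin> e}"
      using assms(2) \<open>x \<in> V\<close> unfolding two_connected_def by blast
    show "finitely_separable_pair E x c" if "c \<in> V - {x}" for c
      using assms(3) \<open>x \<in> V\<close> that unfolding finitely_separable_def by auto
  qed
qed

end
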